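(* Consider a switched descriptor system $E_{\sigma(t)}\dot x=A_{\sigma(t)}x$, $\sigma(t)\in\{1,\dots,N\}$, with each $A_i$ nonsingular. For each $i$ let $C_i$ be a matrix such that $x\in\mathcal{C}(E_i,A_i)$ if and only if $C_ix=0$. Suppose there is a symmetric matrix $P$ such that for all $i=1,\dots,N$, $$P+C_i^TC_i>0,\qquad PA_i^{-1}E_i+E_i^TA_i^{-T}P-C_i^TC_i<0,$$ and that for every solution, $x(t_*^+)^TPx(t_*^+)\le x(t_*^-)^TPx(t_*^-)$ whenever $\sigma$ switches at $t_*$. Then the system is GUES.
   Context: For $E,A\in\mathbb{R}^{n\times n}$ with $A$ nonsingular, $(E,A)$ denotes the descriptor system $E\dot x=Ax$; its index is the smallest $k^*\ge0$ with $\mathrm{Im}((A^{-1}E)^{k^*+1})=\mathrm{Im}((A^{-1}E)^{k^*})$ and its consistency space is $\mathcal{C}(E,A)=\mathrm{Im}((A^{-1}E)^{k^*})$. Switched descriptor system: the switching signal $\sigma$ is piecewise constant with values in $\{1,\dots,N\}$ and finitely many discontinuities in every bounded interval. A solution is a function $x(\cdot)$ that is differentiable and satisfies $E_{\sigma(t)}\dot x(t)=A_{\sigma(t)}x(t)$ at every $t$ where $\sigma$ is continuous, and has one-sided limits $x(t_*^\pm)$ at each discontinuity $t_*$ of $\sigma$; the equation is not required at discontinuities, and the relation between $x(t_*^+)$ and $x(t_*^-)$ and the allowed switches are part of the system specification. The system is GUES if there exist $\beta,\alpha>0$ such that every solution satisfies $\|x(t)\|\le\beta e^{-\alpha(t-t_0)}\|x(t_0)\|$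 for all $t\ge t_0$. $M>0$ ($M<0$) means positive (negative) definite. *)

theory Defs
  imports "HOL-Analysis.Analysis"
begin

(* k-th matrix power M^k (note: the type-class power on vec is componentwise, so we define it) *)
definition mat_pow :: "real^'n^'n \<Rightarrow> nat \<Rightarrow> real^'n^'n" where
  "mat_pow M k = (((**) M) ^^ k) (mat 1)"

definition mat_image :: "real^'n^'m \<Rightarrow> (real^'m) set" where
  "mat_image M = range (\<lambda>x. M *v x)"

definition dae_index :: "real^'n^'n \<Rightarrow> real^'n^'n \<Rightarrow> nat" where
  "dae_index E A = (LEAST k. mat_image (mat_pow (matrix_inv A ** E) (Suc k))
                              = mat_image (mat_pow (matrix_inv A ** E) k))"

definition consistency_space :: "real^'n^'n \<Rightarrow> real^'n^'n \<Rightarrow> (real^'n) set" where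
  "consistency_space E A = mat_image (mat_pow (matrix_inv A ** E) (dae_index E A))"

definition pos_def :: "real^'n^'n \<Rightarrow> bool" where
  "pos_def M \<longleftrightarrow> transpose M = M \<and> (\<forall>x. x \<noteq> 0 \<longrightarrow> x \<bullet> (M *v x) > 0)"

definition neg_def :: "real^'n^'n \<Rightarrow> bool" where
  "neg_def M \<longleftrightarrow> transpose M = M \<and> (\<forall>x. x \<noteq> 0 \<longrightarrow> x \<bullet> (M *v x) < 0)"

(* switching signal: piecewise constant (locally constant off a set of discontinuities that is
   finite in every bounded interval; nat carries the discrete topology), values in {1..N} *)
definition switching_signal :: "nat \<Rightarrow> (real \<Rightarrow> nat) \<Rightarrow> bool" where
  "switching_signal N \<sigma> \<longleftrightarrow> (\<forall>t. \<sigma> t \<in> {1..N}) \<and>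
     (\<forall>a b. finite {t \<in> {a..b}. \<not> isCont \<sigma> t})"

definition switched_solution ::
  "nat \<Rightarrow> (nat \<Rightarrow> real^'n^'n) \<Rightarrow> (nat \<Rightarrow> real^'n^'n) \<Rightarrow> (real \<Rightarrow> nat) \<Rightarrow> (real \<Rightarrow> real^'n) \<Rightarrow> real \<Rightarrow> bool"
  where
  "switched_solution N E A \<sigma> x t0 \<longleftrightarrow>
     switching_signal N \<sigma> \<and>
     (\<forall>t\<ge>t0. isCont \<sigma> t \<longrightarrow>
        (\<exists>x'. (x has_vector_derivative x') (at t within {t0..}) \<and>
              E (\<sigma> t) *v x' = A (\<sigma> t) *v x t)) \<and>
     (\<forall>t\<ge>t0. \<not> isCont \<sigma> t \<longrightarrow>
        (\<exists>r. (x \<longlongrightarrow> r) (at_right t)) \<and>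
        (t > t0 \<longrightarrow> (\<exists>l. (x \<longlongrightarrow> l) (at_left t))) \<and>
        ((x \<longlongrightarrow> x t) (at_right t) \<or> (t > t0 \<and> (x \<longlongrightarrow> x t) (at_left t))))"

definition jump_nonincreasing :: "real^'n^'n \<Rightarrow> (real \<Rightarrow> nat) \<Rightarrow> (real \<Rightarrow> real^'n) \<Rightarrow> real \<Rightarrow> bool" where
  "jump_nonincreasing P \<sigma> x t0 \<longleftrightarrow>
     (\<forall>t>t0. \<not> isCont \<sigma> t \<longrightarrow>
        (let l = Lim (at_left t) x; r = Lim (at_right t) x in r \<bullet> (P *v r) \<le> l \<bullet> (P *v l)))"

definition GUES :: "((real \<Rightarrow> nat) \<times> (real \<Rightarrow> real^'n) \<times> real) set \<Rightarrow> bool" where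
  "GUES S \<longleftrightarrow> (\<exists>\<beta>>0. \<exists>\<alpha>>0. \<forall>(\<sigma>, x, t0)\<in>S. \<forall>t\<ge>t0.
      norm (x t) \<le> \<beta> * exp (- \<alpha> * (t - t0)) * norm (x t0))"

end

(*
  V(x) = x^T P x is a common Lyapunov function. While sigma is continuous the solution stays in
  the consistency space of the active mode; this space is a closed subspace, so the derivative x'
  lies in it as well, and x = A^-1 E x'. Hence the derivative of V along the solution is
  x'^T (P A^-1 E + E^T A^-T P) x', which by the second LMI and C x' = 0 is at most -c |x|^2,
  hence at most -(c/B) V(x) for a bound V <= B |.|^2; at switches V does not increase by the
  jump condition. So V(x(t)) <= exp(-(c/B)(t - t0)) V(x(t0)). Finally the first LMI makes V
  coercive on ker C_i, which contains every value of the solution, and this turns the decay of V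
  into exponential decay of |x|. There are finitely many modes, so all constants are uniform.
*)

theory Submission
  imports Defs
begin

section \<open>Real analysis\<close>

lemma has_vector_derivative_imp_difference_quotient:
  fixes f :: "real \<Rightarrow> 'a::real_normed_vector"
  assumes "(f has_vector_derivative f') (at s within T)"
  shows "((\<lambda>u. inverse (u - s) *\<^sub>R (f u - f s)) \<longlongrightarrow> f') (at s within T)"
proof -
  have "((\<lambda>u. norm ((f u - f s) - (u - s) *\<^sub>R f') / norm (u - s)) \<longlongrightarrow> 0) (at s within T)"
    using assms unfolding has_vector_derivative_def has_derivative_iff_norm by simp
  moreover have "\<forall>\<^sub>F u in at s within T.
      norm ((f u - f s) - (u - s) *\<^sub>R f') / norm (u - s) = norm (inverse (u - s) *\<^sub>R (f u - f s) - f')"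
  proof (rule eventually_at_filter[THEN iffD2], rule always_eventually, intro allI impI)
    fix u assume "u \<noteq> s"
    then have "inverse (u - s) *\<^sub>R (f u - f s) - f' = inverse (u - s) *\<^sub>R ((f u - f s) - (u - s) *\<^sub>R f')"
      by (simp add: scaleR_diff_right)
    then show "norm ((f u - f s) - (u - s) *\<^sub>R f') / norm (u - s) = norm (inverse (u - s) *\<^sub>R (f u - f s) - f')"
      by (simp add: divide_inverse abs_inverse mult.commute)
  qed
  ultimately have "((\<lambda>u. norm (inverse (u - s) *\<^sub>R (f u - f s) - f')) \<longlongrightarrow> 0) (at s within T)"
    by (rule Lim_transform_eventually)
  then show ?thesis
    by (simp add: tendsto_norm_zero_iff LIM_zero_iff)
qed

lemma has_vector_derivative_in_closed_subspace:
  fixes f :: "real \<Rightarrow> 'a::euclidean_space"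
  assumes "(f has_vector_derivative f') (at s within T)" "\<not> trivial_limit (at s within T)"
    and "closed K" "subspace K"
    and "\<forall>\<^sub>F u in at s within T. f u \<in> K" "f s \<in> K"
  shows "f' \<in> K"
proof (rule Lim_in_closed_set[OF \<open>closed K\<close> _ assms(2)
      has_vector_derivative_imp_difference_quotient[OF assms(1)]])
  show "\<forall>\<^sub>F u in at s within T. inverse (u - s) *\<^sub>R (f u - f s) \<in> K"
    using assms(5) by eventually_elim (use assms(4,6) in \<open>simp add: subspace_scale subspace_diff\<close>)
qed

lemma at_within_atLeast_nontrivial:
  fixes s t0 :: real
  assumes "t0 \<le> s"
  shows "\<not> trivial_limit (at s within {t0..})"
proof
  assume "trivial_limit (at s within {t0..})"
  moreover have "at_right s \<le> at s within {t0..}"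
    by (rule at_le) (use assms in auto)
  ultimately show False
    by (simp add: bot_unique)
qed

lemma isolated_if_locally_finite:
  fixes s :: real
  assumes "\<forall>a b. finite {t \<in> {a..b}. D t}"
  shows "\<exists>e>0. \<forall>u. u \<noteq> s \<and> \<bar>u - s\<bar> < e \<longrightarrow> \<not> D u"
proof -
  obtain d where d: "d > 0" "\<forall>u\<in>{t \<in> {s - 1..s + 1}. D t}. u \<noteq> s \<longrightarrow> d \<le> dist s u"
    using finite_set_avoid[of "{t \<in> {s - 1..s + 1}. D t}" s] assms by blast
  have "\<not> D u" if "u \<noteq> s" "\<bar>u - s\<bar> < min d 1" for u
    using d(2)[rule_format, of u] that by (auto simp: dist_real_def abs_minus_commute abs_less_iff)
  then show ?thesis
    using d(1) by (intro exI[of _ "min d 1"]) auto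
qed

lemma isCont_nat_valued_eventually_constant:
  fixes \<sigma> :: "real \<Rightarrow> nat"
  assumes "isCont \<sigma> s"
  shows "\<forall>\<^sub>F u in nhds s. isCont \<sigma> u \<and> \<sigma> u = \<sigma> s"
proof -
  have "\<forall>\<^sub>F u in nhds s. \<sigma> u = \<sigma> s"
    using assms unfolding isCont_def tendsto_def eventually_at_filter
    by (auto simp: open_discrete elim!: allE[of _ "{\<sigma> s}"] elim: eventually_mono)
  then have "\<forall>\<^sub>F u in nhds s. \<forall>\<^sub>F v in nhds u. \<sigma> v = \<sigma> s"
    by (simp add: eventually_eventually)
  then show ?thesis
    using \<open>\<forall>\<^sub>F u in nhds s. \<sigma> u = \<sigma> s\<close>
  proof eventually_elim
    case (elim u)
    then have "\<forall>\<^sub>F v in at u. \<sigma> v = \<sigma> u"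
      by (auto simp: eventually_at_filter elim: eventually_mono)
    then show ?case
      using elim unfolding isCont_def by (auto intro: tendsto_eventually)
  qed
qed

lemma nonincreasing_if_locally_nonincreasing:
  fixes W :: "real \<Rightarrow> real"
  assumes right: "\<And>s. t0 \<le> s \<Longrightarrow> \<exists>e>0. \<forall>u. s < u \<and> u < s + e \<longrightarrow> W u \<le> W s"
    and left: "\<And>s. t0 < s \<Longrightarrow> \<exists>e>0. \<forall>u. s - e < u \<and> u < s \<longrightarrow> W s \<le> W u"
    and "t0 \<le> a" "a \<le> b"
  shows "W b \<le> W a"
proof -
  \<comment> \<open>\<open>c = Sup T\<close> is the last point up to which \<open>W\<close> stays below \<open>W a\<close>: the left condition
    puts \<open>c\<close> into \<open>T\<close>, the right one would push \<open>T\<close> beyond \<open>c\<close> unless \<open>c = b\<close>.\<close>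
  define T where "T = {u. a \<le> u \<and> u \<le> b \<and> (\<forall>v. a \<le> v \<and> v \<le> u \<longrightarrow> W v \<le> W a)}"
  define c where "c = Sup T"
  have aT: "a \<in> T" and bdd: "bdd_above T"
    using \<open>a \<le> b\<close> by (auto simp: T_def bdd_above_def)
  have ac: "a \<le> c" and cb: "c \<le> b"
    unfolding c_def using aT bdd by (auto intro!: cSup_upper cSup_least simp: T_def)
  have below_c: "W v \<le> W a" if "a \<le> v" "v < c" for v
  proof -
    have "v < Sup T" "T \<noteq> {}"
      using that aT unfolding c_def by auto
    then obtain u where "u \<in> T" "v < u"
      by (rule less_cSupE)
    then show ?thesis using that by (auto simp: T_def)
  qed
  have Wc: "W c \<le> W a"
  proof (cases "c = a")
    case False
    then obtain e where e: "e > 0" "\<forall>u. c - e < u \<and> u < c \<longrightarrow> W c \<le> W u"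
      using left[of c] ac \<open>t0 \<le> a\<close> by auto
    define u where "u = max a (c - e / 2)"
    have "c - e < u" "u < c" "a \<le> u"
      using e False ac by (auto simp: u_def)
    then show ?thesis using e below_c[of u] by fastforce
  qed simp
  have cT: "c \<in> T"
    using Wc below_c ac cb by (auto simp: T_def) (metis order_le_less)
  show ?thesis
  proof (rule ccontr)
    assume "\<not> W b \<le> W a"
    then have "c < b" using Wc cb by (cases "c = b") auto
    obtain e where e: "e > 0" "\<forall>u. c < u \<and> u < c + e \<longrightarrow> W u \<le> W c"
      using right[of c] ac \<open>t0 \<le> a\<close> by auto
    define u where "u = min b (c + e / 2)"
    have u: "c < u" "u \<le> b" "u < c + e"
      using e \<open>c < b\<close> by (auto simp: u_def)
    have "u \<in> T"
      using cT u e Wc ac unfolding T_def by (smt (verit) mem_Collect_eq)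
    then have "u \<le> c" unfolding c_def by (rule cSup_upper[OF _ bdd])
    then show False using u by simp
  qed
qed

lemma nonincreasing_if_derivative_nonpos_off_isolated:
  fixes W :: "real \<Rightarrow> real"
  assumes D_fin: "\<forall>a b. finite {t \<in> {a..b}. D t}"
    and deriv: "\<And>s. t0 < s \<Longrightarrow> \<not> D s \<Longrightarrow> \<exists>W'. (W has_real_derivative W') (at s) \<and> W' \<le> 0"
    and right: "\<And>s. t0 \<le> s \<Longrightarrow> \<exists>r. (W \<longlongrightarrow> r) (at_right s) \<and> r \<le> W s"
    and left: "\<And>s. t0 < s \<Longrightarrow> \<exists>l. (W \<longlongrightarrow> l) (at_left s) \<and> W s \<le> l"
    and "t0 \<le> a" "a \<le> b"
  shows "W b \<le> W a"
proof -
  have between: "W u \<le> W v" if "t0 < v" "v \<le> u" "\<forall>w\<in>{v..u}. \<not> D w" for u v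
    using DERIV_nonpos_imp_nonincreasing[of v u W] deriv that by auto
  show ?thesis
  proof (rule nonincreasing_if_locally_nonincreasing[of t0 W])
    fix s assume "t0 \<le> s"
    obtain e where e: "e > 0" "\<forall>u. u \<noteq> s \<and> \<bar>u - s\<bar> < e \<longrightarrow> \<not> D u"
      using isolated_if_locally_finite[OF D_fin] by blast
    obtain r where r: "(W \<longlongrightarrow> r) (at_right s)" "r \<le> W s"
      using right \<open>t0 \<le> s\<close> by blast
    have "W u \<le> W s" if "s < u" "u < s + e" for u
    proof -
      have "\<forall>\<^sub>F v in at_right s. W u \<le> W v"
        unfolding eventually_at_right_field
        using that e \<open>t0 \<le> s\<close> by (intro exI[of _ u]) (auto intro!: between)
      then have "W u \<le> r"
        by (rule tendsto_lowerbound[OF r(1)]) simp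
      then show ?thesis using r(2) by simp
    qed
    then show "\<exists>e>0. \<forall>u. s < u \<and> u < s + e \<longrightarrow> W u \<le> W s"
      using e(1) by blast
  next
    fix s assume "t0 < s"
    obtain e where e: "e > 0" "\<forall>u. u \<noteq> s \<and> \<bar>u - s\<bar> < e \<longrightarrow> \<not> D u"
      using isolated_if_locally_finite[OF D_fin] by blast
    obtain l where l: "(W \<longlongrightarrow> l) (at_left s)" "W s \<le> l"
      using left \<open>t0 < s\<close> by blast
    have "W s \<le> W u" if "s - min e (s - t0) < u" "u < s" for u
    proof -
      have "\<forall>\<^sub>F v in at_left s. W v \<le> W u"
        unfolding eventually_at_left_field
        using that e by (intro exI[of _ u]) (auto intro!: between)
      then have "l \<le> W u"
        by (rule tendsto_upperbound[OF l(1)]) simp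
      then show ?thesis using l(2) by simp
    qed
    then show "\<exists>e>0. \<forall>u. s - e < u \<and> u < s \<longrightarrow> W s \<le> W u"
      using e(1) \<open>t0 < s\<close> by (intro exI[of _ "min e (s - t0)"]) auto
  qed (use assms in auto)
qed

section \<open>Quadratic forms and the linear matrix inequalities\<close>

lemma quadratic_form_coercive:
  fixes M :: "real^'n^'n"
  assumes pos: "\<forall>v. v \<noteq> 0 \<longrightarrow> v \<bullet> (M *v v) > 0"
  shows "\<exists>l>0. \<forall>v. l * (norm v)\<^sup>2 \<le> v \<bullet> (M *v v)"
proof -
  let ?q = "\<lambda>v. v \<bullet> (M *v v)"
  have "continuous_on (sphere 0 1) ?q"
    by (intro continuous_intros linear_continuous_on matrix_vector_mul_bounded_linear)
  moreover have "sphere (0::real^'n) 1 \<noteq> {}"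
    by simp
  ultimately obtain u where u: "u \<in> sphere 0 1" and min: "\<forall>w\<in>sphere 0 1. ?q u \<le> ?q w"
    using continuous_attains_inf[OF compact_sphere] by blast
  have "?q u * (norm v)\<^sup>2 \<le> ?q v" for v
  proof (cases "v = 0")
    case False
    then have "inverse (norm v) *\<^sub>R v \<in> sphere 0 1"
      by simp
    then have "?q u \<le> ?q (inverse (norm v) *\<^sub>R v)"
      using min by blast
    also have "\<dots> = ?q v / (norm v)\<^sup>2"
      by (simp add: matrix_vector_mult_scaleR power2_eq_square divide_inverse mult_ac)
    finally show ?thesis
      using False by (simp add: pos_le_divide_eq)
  qed simp
  moreover have "u \<noteq> 0"
    using u by auto
  then have "?q u > 0"
    using pos by blast
  ultimately show ?thesis by blast
qed

lemma quadratic_form_bounded: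
  fixes M :: "real^'n^'n"
  shows "\<exists>B>0. \<forall>v. v \<bullet> (M *v v) \<le> B * (norm v)\<^sup>2"
proof -
  obtain B where "B > 0" and B: "\<forall>v. norm (M *v v) \<le> norm v * B"
    using bounded_linear.pos_bounded[OF matrix_vector_mul_bounded_linear] by blast
  have "v \<bullet> (M *v v) \<le> B * (norm v)\<^sup>2" for v
    using norm_cauchy_schwarz[of v "M *v v"] mult_left_mono[OF B[rule_format, of v], of "norm v"]
    by (simp add: power2_eq_square mult_ac)
  then show ?thesis using \<open>B > 0\<close> by blast
qed

lemma matrix_vector_mult_uminus: "(- M) *v v = - (M *v v)"
  for M :: "real^'n^'m"
  by (simp add: matrix_vector_mult_def vec_eq_iff sum_negf)

lemma inner_transpose_matrix_vector:
  fixes M :: "real^'n^'m"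
  shows "y \<bullet> (transpose M *v w) = (M *v y) \<bullet> w"
  by (metis inner_commute dot_lmul_matrix transpose_matrix_vector)

lemma inner_lyapunov_matrix:
  fixes P M :: "real^'n^'n" and C :: "real^'n^'m"
  shows "y \<bullet> ((P ** M + transpose M ** P - transpose C ** C) *v y)
    = (M *v y) \<bullet> (P *v y) + y \<bullet> (P *v (M *v y)) - (C *v y) \<bullet> (C *v y)"
  by (simp add: matrix_vector_mult_add_rdistrib matrix_vector_mult_diff_rdistrib inner_add_right
      inner_diff_right matrix_vector_mul_assoc[symmetric] inner_transpose_matrix_vector
      del: transpose_matrix_vector)

lemma pos_def_kernel_coercive:
  fixes P :: "real^'n^'n" and C :: "real^'n^'m"
  assumes "pos_def (P + transpose C ** C)"
  shows "\<exists>l>0. \<forall>v. C *v v = 0 \<longrightarrow> l * (norm v)\<^sup>2 \<le> v \<bullet> (P *v v)"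
proof -
  obtain l where "l > 0" and l: "\<forall>v. l * (norm v)\<^sup>2 \<le> v \<bullet> ((P + transpose C ** C) *v v)"
    using quadratic_form_coercive assms unfolding pos_def_def by blast
  have "(P + transpose C ** C) *v v = P *v v" if "C *v v = 0" for v
    using that by (simp add: matrix_vector_mult_add_rdistrib matrix_vector_mul_assoc[symmetric])
  then show ?thesis
    using \<open>l > 0\<close> l by metis
qed

text \<open>For \<open>x = M y\<close> the left-hand side below is the derivative of \<open>x\<^sup>T P x\<close> along \<open>x' = y\<close>.\<close>

lemma neg_def_lyapunov_rate:
  fixes P M :: "real^'n^'n" and C :: "real^'n^'m"
  assumes "neg_def (P ** M + transpose M ** P - transpose C ** C)"
  shows "\<exists>c>0. \<forall>y. C *v y = 0 \<longrightarrow>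
    (M *v y) \<bullet> (P *v y) + y \<bullet> (P *v (M *v y)) \<le> - c * (norm (M *v y))\<^sup>2"
proof -
  let ?L = "P ** M + transpose M ** P - transpose C ** C"
  obtain m where "m > 0" and m: "\<forall>y. m * (norm y)\<^sup>2 \<le> y \<bullet> ((- ?L) *v y)"
    using quadratic_form_coercive[of "- ?L"] assms
    unfolding neg_def_def matrix_vector_mult_uminus inner_minus_right by auto
  obtain b where "b > 0" and b: "\<forall>y. norm (M *v y) \<le> norm y * b"
    using bounded_linear.pos_bounded[OF matrix_vector_mul_bounded_linear] by blast
  have "(M *v y) \<bullet> (P *v y) + y \<bullet> (P *v (M *v y)) \<le> - (m / b\<^sup>2) * (norm (M *v y))\<^sup>2"
    if "C *v y = 0" for y
  proof -
    have "(m / b\<^sup>2) * (norm (M *v y))\<^sup>2 \<le> (m / b\<^sup>2) * (norm y * b)\<^sup>2"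
      using b \<open>m > 0\<close> by (intro mult_left_mono power_mono) auto
    also have "\<dots> = m * (norm y)\<^sup>2"
      using \<open>b > 0\<close> by (simp add: power_mult_distrib)
    also have "\<dots> \<le> y \<bullet> ((- ?L) *v y)"
      using m by blast
    also have "\<dots> = - ((M *v y) \<bullet> (P *v y) + y \<bullet> (P *v (M *v y)))"
      using that by (simp only: matrix_vector_mult_uminus inner_minus_right inner_lyapunov_matrix) simp
    finally show ?thesis by simp
  qed
  then show ?thesis
    using \<open>m > 0\<close> \<open>b > 0\<close> by (intro exI[of _ "m / b\<^sup>2"]) auto
qed

lemma finite_uniform_positive_constant:
  fixes Q :: "'a \<Rightarrow> real \<Rightarrow> bool"
  assumes "finite I" and ex: "\<forall>i\<in>I. \<exists>e>0. Q i e"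
    and mono: "\<And>i e e'. Q i e \<Longrightarrow> 0 < e' \<Longrightarrow> e' \<le> e \<Longrightarrow> Q i e'"
  obtains e where "e > 0" "\<forall>i\<in>I. Q i e"
proof -
  obtain f where f: "\<forall>i\<in>I. f i > 0 \<and> Q i (f i)"
    using bchoice[OF ex] by blast
  define e where "e = Min (insert 1 (f ` I))"
  have "e > 0" "\<forall>i\<in>I. e \<le> f i"
    using f \<open>finite I\<close> unfolding e_def by auto
  then show ?thesis
    using that f mono by blast
qed

lemma uniform_kernel_coercive:
  fixes P :: "real^'n^'n" and C :: "'i \<Rightarrow> real^'n^'m"
  assumes "finite I" and "\<forall>i\<in>I. pos_def (P + transpose (C i) ** C i)"
  obtains l where "l > 0" "\<forall>i\<in>I. \<forall>v. C i *v v = 0 \<longrightarrow> l * (norm v)\<^sup>2 \<le> v \<bullet> (P *v v)"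
proof (rule finite_uniform_positive_constant[OF \<open>finite I\<close>])
  show "\<forall>i\<in>I. \<exists>l>0. \<forall>v. C i *v v = 0 \<longrightarrow> l * (norm v)\<^sup>2 \<le> v \<bullet> (P *v v)"
    using assms(2) pos_def_kernel_coercive by blast
next
  fix i and l l' :: real
  assume "\<forall>v. C i *v v = 0 \<longrightarrow> l * (norm v)\<^sup>2 \<le> v \<bullet> (P *v v)" "0 < l'" "l' \<le> l"
  then show "\<forall>v. C i *v v = 0 \<longrightarrow> l' * (norm v)\<^sup>2 \<le> v \<bullet> (P *v v)"
    by (meson order_trans mult_right_mono zero_le_power2)
qed (use that in blast)

lemma uniform_lyapunov_rate:
  fixes P :: "real^'n^'n" and M :: "'i \<Rightarrow> real^'n^'n" and C :: "'i \<Rightarrow> real^'n^'m"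
  assumes "finite I" and "\<forall>i\<in>I. neg_def (P ** M i + transpose (M i) ** P - transpose (C i) ** C i)"
  obtains c where "c > 0" "\<forall>i\<in>I. \<forall>y. C i *v y = 0 \<longrightarrow>
    (M i *v y) \<bullet> (P *v y) + y \<bullet> (P *v (M i *v y)) \<le> - c * (norm (M i *v y))\<^sup>2"
proof (rule finite_uniform_positive_constant[OF \<open>finite I\<close>])
  show "\<forall>i\<in>I. \<exists>c>0. \<forall>y. C i *v y = 0 \<longrightarrow>
      (M i *v y) \<bullet> (P *v y) + y \<bullet> (P *v (M i *v y)) \<le> - c * (norm (M i *v y))\<^sup>2"
    using assms(2) neg_def_lyapunov_rate by blast
next
  fix i and c c' :: real
  assume "\<forall>y. C i *v y = 0 \<longrightarrow> (M i *v y) \<bullet> (P *v y) + y \<bullet> (P *v (M i *v y)) \<le> - c * (norm (M i *v y))\<^sup>2"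
    "0 < c'" "c' \<le> c"
  then show "\<forall>y. C i *v y = 0 \<longrightarrow>
      (M i *v y) \<bullet> (P *v y) + y \<bullet> (P *v (M i *v y)) \<le> - c' * (norm (M i *v y))\<^sup>2"
    by (meson order_trans mult_right_mono zero_le_power2 neg_le_iff_le)
qed (use that in blast)

lemma lyapunov_rate_from_norm_rate:
  fixes P :: "real^'n^'n"
  assumes "B > 0" "\<forall>v. v \<bullet> (P *v v) \<le> B * (norm v)\<^sup>2" "c > 0"
    and "d \<le> - c * (norm z)\<^sup>2"
  shows "d \<le> - (c / B) * (z \<bullet> (P *v z))"
proof -
  have "(c / B) * (z \<bullet> (P *v z)) \<le> (c / B) * (B * (norm z)\<^sup>2)"
    using assms(1-3) by (intro mult_left_mono) auto
  then show ?thesis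
    using assms(1,4) by simp
qed

section \<open>Solutions of switched descriptor systems\<close>

lemma matrix_inv_mult_left:
  fixes A :: "real^'n^'n"
  assumes "invertible A"
  shows "matrix_inv A ** A = mat 1"
proof -
  have "\<exists>A'. A ** A' = mat 1 \<and> A' ** A = mat 1"
    using assms by (simp add: invertible_def)
  then show ?thesis
    unfolding matrix_inv_def by (rule someI2_ex) blast
qed

lemma descriptor_state_eq:
  fixes A E :: "real^'n^'n"
  assumes "invertible A" "E *v x' = A *v x"
  shows "x = (matrix_inv A ** E) *v x'"
proof -
  have "(matrix_inv A ** E) *v x' = matrix_inv A *v (A *v x)"
    using assms(2) by (simp add: matrix_vector_mul_assoc[symmetric])
  also have "\<dots> = x"
    by (simp add: matrix_vector_mul_assoc matrix_inv_mult_left[OF assms(1)])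
  finally show ?thesis by simp
qed

lemma subspace_mat_image: "subspace (mat_image (M::real^'n^'m))"
  unfolding mat_image_def
  by (metis linear_subspace_image matrix_vector_mul_linear subspace_UNIV)

lemma closed_mat_image: "closed (mat_image (M::real^'n^'m))"
  by (rule closed_subspace[OF subspace_mat_image])

lemma subspace_consistency_space: "subspace (consistency_space E A)"
  unfolding consistency_space_def by (rule subspace_mat_image)

lemma closed_consistency_space: "closed (consistency_space E A)"
  unfolding consistency_space_def by (rule closed_mat_image)

lemma mat_image_mat_pow_Suc:
  "y \<in> mat_image (mat_pow M k) \<Longrightarrow> M *v y \<in> mat_image (mat_pow M (Suc k))"
  by (auto simp: mat_image_def mat_pow_def matrix_vector_mul_assoc)

lemma switched_solution_derivative_in_subspace:
  assumes sol: "switched_solution N E A \<sigma> x t0"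
    and inv: "\<forall>i\<in>{1..N}. invertible (A i)"
    and s: "t0 \<le> s" "isCont \<sigma> s"
    and "closed K" "subspace K"
    and K: "\<And>u. t0 \<le> u \<Longrightarrow> isCont \<sigma> u \<Longrightarrow> \<sigma> u = \<sigma> s \<Longrightarrow> x u \<in> K"
  obtains x' where "(x has_vector_derivative x') (at s within {t0..})"
    "x s = (matrix_inv (A (\<sigma> s)) ** E (\<sigma> s)) *v x'" "x' \<in> K"
proof -
  have "\<sigma> s \<in> {1..N}"
    using sol by (simp add: switched_solution_def switching_signal_def)
  then obtain x' where x': "(x has_vector_derivative x') (at s within {t0..})"
    "x s = (matrix_inv (A (\<sigma> s)) ** E (\<sigma> s)) *v x'"
    using sol s inv descriptor_state_eq unfolding switched_solution_def by blast
  have "\<forall>\<^sub>F u in at s within {t0..}. x u \<in> K"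
    using isCont_nat_valued_eventually_constant[OF s(2)] K
    by (auto simp: eventually_at_filter elim: eventually_mono)
  then have "x' \<in> K"
    using has_vector_derivative_in_closed_subspace[OF x'(1) at_within_atLeast_nontrivial[OF s(1)]
        \<open>closed K\<close> \<open>subspace K\<close>] K s by blast
  then show ?thesis
    using that x' by blast
qed

lemma switched_solution_in_mat_image:
  assumes sol: "switched_solution N E A \<sigma> x t0"
    and inv: "\<forall>i\<in>{1..N}. invertible (A i)"
    and "t0 \<le> s" "isCont \<sigma> s"
  shows "x s \<in> mat_image (mat_pow (matrix_inv (A (\<sigma> s)) ** E (\<sigma> s)) k)"
  using assms(3,4)
proof (induction k arbitrary: s)
  case 0
  then show ?case by (simp add: mat_image_def mat_pow_def)
next
  case (Suc k)
  obtain x' where "x s = (matrix_inv (A (\<sigma> s)) ** E (\<sigma> s)) *v x'"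
    and "x' \<in> mat_image (mat_pow (matrix_inv (A (\<sigma> s)) ** E (\<sigma> s)) k)"
    using switched_solution_derivative_in_subspace[OF sol inv Suc.prems closed_mat_image subspace_mat_image]
      Suc.IH by metis
  then show ?case
    by (simp add: mat_image_mat_pow_Suc)
qed

lemma switched_solution_consistent:
  assumes sol: "switched_solution N E A \<sigma> x t0"
    and inv: "\<forall>i\<in>{1..N}. invertible (A i)"
    and "t0 \<le> s" "isCont \<sigma> s"
  obtains x' where "(x has_vector_derivative x') (at s within {t0..})"
    "x s = (matrix_inv (A (\<sigma> s)) ** E (\<sigma> s)) *v x'"
    "x s \<in> consistency_space (E (\<sigma> s)) (A (\<sigma> s))"
    "x' \<in> consistency_space (E (\<sigma> s)) (A (\<sigma> s))"
proof -
  have consistent: "x u \<in> consistency_space (E (\<sigma> u)) (A (\<sigma> u))" if "t0 \<le> u" "isCont \<sigma> u" for u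
    using switched_solution_in_mat_image[OF sol inv that] by (simp add: consistency_space_def)
  obtain x' where "(x has_vector_derivative x') (at s within {t0..})"
    "x s = (matrix_inv (A (\<sigma> s)) ** E (\<sigma> s)) *v x'"
    "x' \<in> consistency_space (E (\<sigma> s)) (A (\<sigma> s))"
    using switched_solution_derivative_in_subspace[OF sol inv assms(3,4)
        closed_consistency_space subspace_consistency_space] consistent by metis
  then show ?thesis
    using that consistent assms(3,4) by blast
qed

lemma jump_nonincreasingD:
  assumes "jump_nonincreasing P \<sigma> x t0" "t0 < s" "\<not> isCont \<sigma> s"
    and "(x \<longlongrightarrow> l) (at_left s)" "(x \<longlongrightarrow> r) (at_right s)"
  shows "r \<bullet> (P *v r) \<le> l \<bullet> (P *v l)"
proof -
  have "Lim (at_left s) x = l" "Lim (at_right s) x = r"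
    using assms(4,5) by (auto intro: tendsto_Lim)
  then show ?thesis
    using assms(1-3) unfolding jump_nonincreasing_def Let_def by metis
qed

lemma switched_solution_continuous_within:
  assumes "switched_solution N E A \<sigma> x t0" "t0 \<le> s" "isCont \<sigma> s"
  shows "(x \<longlongrightarrow> x s) (at s within {t0..})"
proof -
  obtain x' where "(x has_vector_derivative x') (at s within {t0..})"
    using assms unfolding switched_solution_def by blast
  then show ?thesis
    using has_vector_derivative_continuous continuous_within by blast
qed

lemma switched_solution_right_limit:
  assumes sol: "switched_solution N E A \<sigma> x t0" and jump: "jump_nonincreasing P \<sigma> x t0"
    and "t0 \<le> s"
  obtains r where "(x \<longlongrightarrow> r) (at_right s)" "r \<bullet> (P *v r) \<le> x s \<bullet> (P *v x s)"
proof (cases "isCont \<sigma> s")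
  case True
  have "at_right s \<le> at s within {t0..}"
    by (rule at_le) (use \<open>t0 \<le> s\<close> in auto)
  then show ?thesis
    using that tendsto_mono switched_solution_continuous_within[OF sol \<open>t0 \<le> s\<close> True] by blast
next
  case False
  obtain r where r: "(x \<longlongrightarrow> r) (at_right s)"
    using sol False \<open>t0 \<le> s\<close> unfolding switched_solution_def by blast
  have "(x \<longlongrightarrow> x s) (at_right s) \<or> (t0 < s \<and> (x \<longlongrightarrow> x s) (at_left s))"
    using sol False \<open>t0 \<le> s\<close> unfolding switched_solution_def by blast
  then show ?thesis
    using that r jump_nonincreasingD[OF jump _ False _ r] by blast
qed

lemma switched_solution_left_limit:
  assumes sol: "switched_solution N E A \<sigma> x t0" and jump: "jump_nonincreasing P \<sigma> x t0"
    and "t0 < s"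
  obtains l where "(x \<longlongrightarrow> l) (at_left s)" "x s \<bullet> (P *v x s) \<le> l \<bullet> (P *v l)"
proof (cases "isCont \<sigma> s")
  case True
  have "at s within {t0..} = at s"
    using \<open>t0 < s\<close> by (intro at_within_interior) auto
  then have "(x \<longlongrightarrow> x s) (at_left s)"
    using switched_solution_continuous_within[OF sol _ True] \<open>t0 < s\<close>
    by (metis at_le subset_UNIV less_imp_le tendsto_mono)
  then show ?thesis
    using that by blast
next
  case False
  obtain l where l: "(x \<longlongrightarrow> l) (at_left s)"
    using sol False \<open>t0 < s\<close> unfolding switched_solution_def by (meson less_imp_le)
  have "(x \<longlongrightarrow> x s) (at_right s) \<or> (x \<longlongrightarrow> x s) (at_left s)"
    using sol False \<open>t0 < s\<close> unfolding switched_solution_def by (meson less_imp_le)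
  then show ?thesis
    using that l jump_nonincreasingD[OF jump \<open>t0 < s\<close> False l] by blast
qed

lemma switched_solution_closed_invariant:
  assumes sol: "switched_solution N E A \<sigma> x t0" and "closed G"
    and G: "\<And>s. t0 \<le> s \<Longrightarrow> isCont \<sigma> s \<Longrightarrow> x s \<in> G" and "t0 \<le> t"
  shows "x t \<in> G"
proof (cases "isCont \<sigma> t")
  case True
  then show ?thesis using G \<open>t0 \<le> t\<close> by blast
next
  case False
  obtain e where e: "e > 0" "\<forall>u. u \<noteq> t \<and> \<bar>u - t\<bar> < e \<longrightarrow> isCont \<sigma> u"
    using isolated_if_locally_finite[of "\<lambda>t. \<not> isCont \<sigma> t" t] sol
    unfolding switched_solution_def switching_signal_def by auto
  have "(x \<longlongrightarrow> x t) (at_right t) \<or> (t0 < t \<and> (x \<longlongrightarrow> x t) (at_left t))"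
    using sol False \<open>t0 \<le> t\<close> unfolding switched_solution_def by blast
  then show ?thesis
  proof
    assume "(x \<longlongrightarrow> x t) (at_right t)"
    moreover have "\<forall>\<^sub>F u in at_right t. x u \<in> G"
      unfolding eventually_at_right_field
      using e \<open>t0 \<le> t\<close> by (intro exI[of _ "t + e"]) (auto intro!: G)
    ultimately show ?thesis
      by (auto intro: Lim_in_closed_set[OF \<open>closed G\<close>])
  next
    assume left: "t0 < t \<and> (x \<longlongrightarrow> x t) (at_left t)"
    moreover have "\<forall>\<^sub>F u in at_left t. x u \<in> G"
      unfolding eventually_at_left_field
      using e left by (intro exI[of _ "max t0 (t - e)"]) (auto intro!: G)
    ultimately show ?thesis
      by (auto intro: Lim_in_closed_set[OF \<open>closed G\<close>])
  qed
qed

section \<open>Exponential decay\<close>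

lemma switched_solution_lyapunov_derivative:
  fixes P :: "real^'n^'n"
  assumes sol: "switched_solution N E A \<sigma> x t0"
    and inv: "\<forall>i\<in>{1..N}. invertible (A i)"
    and decay: "\<forall>i\<in>{1..N}. \<forall>y\<in>consistency_space (E i) (A i).
      ((matrix_inv (A i) ** E i) *v y) \<bullet> (P *v y) + y \<bullet> (P *v ((matrix_inv (A i) ** E i) *v y))
        \<le> - k * (((matrix_inv (A i) ** E i) *v y) \<bullet> (P *v ((matrix_inv (A i) ** E i) *v y)))"
    and "t0 < s" "isCont \<sigma> s"
  obtains V' where "((\<lambda>u. x u \<bullet> (P *v x u)) has_real_derivative V') (at s)"
    "V' \<le> - k * (x s \<bullet> (P *v x s))"
proof -
  have at_s: "at s within {t0..} = at s"
    using \<open>t0 < s\<close> by (intro at_within_interior) auto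
  obtain x' where x': "(x has_vector_derivative x') (at s)"
    "x s = (matrix_inv (A (\<sigma> s)) ** E (\<sigma> s)) *v x'"
    "x' \<in> consistency_space (E (\<sigma> s)) (A (\<sigma> s))"
    using switched_solution_consistent[OF sol inv _ \<open>isCont \<sigma> s\<close>] \<open>t0 < s\<close> at_s
    by (metis less_imp_le)
  have "((\<lambda>u. P *v x u) has_vector_derivative P *v x') (at s)"
    by (rule bounded_linear.has_vector_derivative[OF matrix_vector_mul_bounded_linear x'(1)])
  then have "((\<lambda>u. x u \<bullet> (P *v x u)) has_real_derivative x s \<bullet> (P *v x') + x' \<bullet> (P *v x s)) (at s)"
    unfolding has_real_derivative_iff_has_vector_derivative
    by (rule bounded_bilinear.has_vector_derivative[OF bounded_bilinear_inner x'(1)])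
  moreover have "\<sigma> s \<in> {1..N}"
    using sol by (simp add: switched_solution_def switching_signal_def)
  then have "x s \<bullet> (P *v x') + x' \<bullet> (P *v x s) \<le> - k * (x s \<bullet> (P *v x s))"
    using decay x'(2,3) by auto
  ultimately show ?thesis
    using that by blast
qed

lemma switched_solution_lyapunov_decay:
  fixes P :: "real^'n^'n"
  assumes sol: "switched_solution N E A \<sigma> x t0" and jump: "jump_nonincreasing P \<sigma> x t0"
    and inv: "\<forall>i\<in>{1..N}. invertible (A i)"
    and decay: "\<forall>i\<in>{1..N}. \<forall>y\<in>consistency_space (E i) (A i).
      ((matrix_inv (A i) ** E i) *v y) \<bullet> (P *v y) + y \<bullet> (P *v ((matrix_inv (A i) ** E i) *v y))
        \<le> - k * (((matrix_inv (A i) ** E i) *v y) \<bullet> (P *v ((matrix_inv (A i) ** E i) *v y)))"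
    and "t0 \<le> t"
  shows "x t \<bullet> (P *v x t) \<le> exp (- k * (t - t0)) * (x t0 \<bullet> (P *v x t0))"
proof -
  define V where "V v = v \<bullet> (P *v v)" for v
  define W where "W u = exp (k * (u - t0)) * V (x u)" for u
  have W_tendsto: "(W \<longlongrightarrow> exp (k * (s - t0)) * V r) F"
    if "(x \<longlongrightarrow> r) F" "((\<lambda>u. u) \<longlongrightarrow> s) F" for r s F
    unfolding W_def V_def
    by (intro tendsto_intros that bounded_linear.tendsto[OF matrix_vector_mul_bounded_linear])
  have "W t \<le> W t0"
  proof (rule nonincreasing_if_derivative_nonpos_off_isolated[of "\<lambda>s. \<not> isCont \<sigma> s" t0 W])
    show "\<forall>a b. finite {s \<in> {a..b}. \<not> isCont \<sigma> s}"
      using sol by (simp add: switched_solution_def switching_signal_def)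
  next
    fix s assume "t0 < s" "\<not> \<not> isCont \<sigma> s"
    then obtain V' where V': "((\<lambda>u. V (x u)) has_real_derivative V') (at s)" "V' \<le> - k * V (x s)"
      using switched_solution_lyapunov_derivative[OF sol inv decay] unfolding V_def by blast
    have "(W has_real_derivative exp (k * (s - t0)) * (k * V (x s) + V')) (at s)"
      unfolding W_def by (auto intro!: derivative_eq_intros V'(1) simp: algebra_simps)
    moreover have "exp (k * (s - t0)) * (k * V (x s) + V') \<le> 0"
      using V'(2) by (intro mult_nonneg_nonpos) auto
    ultimately show "\<exists>W'. (W has_real_derivative W') (at s) \<and> W' \<le> 0"
      by blast
  next
    fix s assume "t0 \<le> s"
    then obtain r where "(x \<longlongrightarrow> r) (at_right s)" "V r \<le> V (x s)"
      using switched_solution_right_limit[OF sol jump] unfolding V_def by blast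
    then show "\<exists>r. (W \<longlongrightarrow> r) (at_right s) \<and> r \<le> W s"
      using W_tendsto[of r "at_right s" s] by (auto simp: W_def intro: tendsto_ident_at)
  next
    fix s assume "t0 < s"
    then obtain l where "(x \<longlongrightarrow> l) (at_left s)" "V (x s) \<le> V l"
      using switched_solution_left_limit[OF sol jump] unfolding V_def by blast
    then show "\<exists>l. (W \<longlongrightarrow> l) (at_left s) \<and> W s \<le> l"
      using W_tendsto[of l "at_left s" s] by (auto simp: W_def intro: tendsto_ident_at)
  qed (use \<open>t0 \<le> t\<close> in auto)
  then have "exp (- k * (t - t0)) * W t \<le> exp (- k * (t - t0)) * W t0"
    by simp
  then show ?thesis
    by (simp add: W_def V_def mult.assoc[symmetric] exp_add[symmetric])
qed

lemma switched_solution_quadratic_lower_bound: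
  assumes sol: "switched_solution N E A \<sigma> x t0"
    and inv: "\<forall>i\<in>{1..N}. invertible (A i)"
    and coercive: "\<forall>i\<in>{1..N}. \<forall>v\<in>consistency_space (E i) (A i). l * (norm v)\<^sup>2 \<le> v \<bullet> (P *v v)"
    and "t0 \<le> t"
  shows "l * (norm (x t))\<^sup>2 \<le> x t \<bullet> (P *v x t)"
proof -
  have "x t \<in> {v. l * (norm v)\<^sup>2 \<le> v \<bullet> (P *v v)}"
  proof (rule switched_solution_closed_invariant[OF sol _ _ \<open>t0 \<le> t\<close>])
    show "closed {v. l * (norm v)\<^sup>2 \<le> v \<bullet> (P *v v)}"
      by (intro closed_Collect_le continuous_intros linear_continuous_on matrix_vector_mul_bounded_linear)
  next
    fix s assume "t0 \<le> s" "isCont \<sigma> s"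
    moreover have "\<sigma> s \<in> {1..N}"
      using sol by (simp add: switched_solution_def switching_signal_def)
    ultimately show "x s \<in> {v. l * (norm v)\<^sup>2 \<le> v \<bullet> (P *v v)}"
      using switched_solution_consistent[OF sol inv] coercive by (metis mem_Collect_eq)
  qed
  then show ?thesis by simp
qed

lemma switched_solution_exponential_bound:
  fixes P :: "real^'n^'n"
  assumes sol: "switched_solution N E A \<sigma> x t0" and jump: "jump_nonincreasing P \<sigma> x t0"
    and inv: "\<forall>i\<in>{1..N}. invertible (A i)"
    and coercive: "\<forall>i\<in>{1..N}. \<forall>v\<in>consistency_space (E i) (A i). l * (norm v)\<^sup>2 \<le> v \<bullet> (P *v v)"
    and bounded: "\<forall>v. v \<bullet> (P *v v) \<le> B * (norm v)\<^sup>2"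
    and decay: "\<forall>i\<in>{1..N}. \<forall>y\<in>consistency_space (E i) (A i).
      ((matrix_inv (A i) ** E i) *v y) \<bullet> (P *v y) + y \<bullet> (P *v ((matrix_inv (A i) ** E i) *v y))
        \<le> - k * (((matrix_inv (A i) ** E i) *v y) \<bullet> (P *v ((matrix_inv (A i) ** E i) *v y)))"
    and "t0 \<le> t"
  shows "l * (norm (x t))\<^sup>2 \<le> B * exp (- k * (t - t0)) * (norm (x t0))\<^sup>2"
proof -
  have "l * (norm (x t))\<^sup>2 \<le> x t \<bullet> (P *v x t)"
    by (rule switched_solution_quadratic_lower_bound[OF sol inv coercive \<open>t0 \<le> t\<close>])
  also have "\<dots> \<le> exp (- k * (t - t0)) * (x t0 \<bullet> (P *v x t0))"
    by (rule switched_solution_lyapunov_decay[OF sol jump inv decay \<open>t0 \<le> t\<close>])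
  also have "\<dots> \<le> B * exp (- k * (t - t0)) * (norm (x t0))\<^sup>2"
    using mult_left_mono[OF bounded[rule_format, of "x t0"], of "exp (- k * (t - t0))"]
    by (simp add: mult_ac)
  finally show ?thesis .
qed

lemma GUES_if_quadratic_decay:
  assumes "l > 0" "B > 0" "k > 0"
    and bound: "\<And>\<sigma> x t0 t. (\<sigma>, x, t0) \<in> S \<Longrightarrow> t0 \<le> t \<Longrightarrow>
      l * (norm (x t))\<^sup>2 \<le> B * exp (- k * (t - t0)) * (norm (x t0))\<^sup>2"
  shows "GUES S"
proof -
  have "norm (x t) \<le> sqrt (B / l) * exp (- (k / 2) * (t - t0)) * norm (x t0)"
    if "(\<sigma>, x, t0) \<in> S" "t0 \<le> t" for \<sigma> x t0 t
  proof (rule power2_le_imp_le)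
    have "(exp (- (k / 2) * (t - t0)))\<^sup>2 = exp (- k * (t - t0))"
      by (simp add: power2_eq_square exp_add[symmetric])
    then have "(sqrt (B / l) * exp (- (k / 2) * (t - t0)) * norm (x t0))\<^sup>2
        = B * exp (- k * (t - t0)) * (norm (x t0))\<^sup>2 / l"
      using assms(1,2) by (simp only: power_mult_distrib real_sqrt_pow2) simp
    moreover have "(norm (x t))\<^sup>2 \<le> B * exp (- k * (t - t0)) * (norm (x t0))\<^sup>2 / l"
      using bound[OF that] \<open>l > 0\<close> by (simp add: pos_le_divide_eq mult.commute)
    ultimately show "(norm (x t))\<^sup>2 \<le> (sqrt (B / l) * exp (- (k / 2) * (t - t0)) * norm (x t0))\<^sup>2"
      by simp
  qed (use assms(1,2) in simp)
  then show ?thesis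
    unfolding GUES_def using assms(1-3)
    by (intro exI[of _ "sqrt (B / l)"] conjI exI[of _ "k / 2"]) auto
qed

theorem corollary1:
  fixes N :: nat
    and E A :: "nat \<Rightarrow> real^'n^'n"
    and C :: "nat \<Rightarrow> real^'n^'m"
    and P :: "real^'n^'n"
    and S :: "((real \<Rightarrow> nat) \<times> (real \<Rightarrow> real^'n) \<times> real) set"
  assumes A_inv: "\<forall>i\<in>{1..N}. invertible (A i)"
    and C_ker: "\<forall>i\<in>{1..N}. \<forall>x. x \<in> consistency_space (E i) (A i) \<longleftrightarrow> C i *v x = 0"
    and P_sym: "transpose P = P"
    and LMI1: "\<forall>i\<in>{1..N}. pos_def (P + transpose (C i) ** C i)"
    and LMI2: "\<forall>i\<in>{1..N}. neg_def (P ** matrix_inv (A i) ** E i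
                 + transpose (E i) ** transpose (matrix_inv (A i)) ** P
                 - transpose (C i) ** C i)"
    and S_sol: "\<forall>(\<sigma>, x, t0)\<in>S. switched_solution N E A \<sigma> x t0"
    and S_jump: "\<forall>(\<sigma>, x, t0)\<in>S. jump_nonincreasing P \<sigma> x t0"
  shows "GUES S"
proof -
  define M where "M i = matrix_inv (A i) ** E i" for i
  obtain l where "l > 0" and l: "\<forall>i\<in>{1..N}. \<forall>v. C i *v v = 0 \<longrightarrow> l * (norm v)\<^sup>2 \<le> v \<bullet> (P *v v)"
    using uniform_kernel_coercive[OF finite_atLeastAtMost LMI1] by blast
  have "\<forall>i\<in>{1..N}. neg_def (P ** M i + transpose (M i) ** P - transpose (C i) ** C i)"
    using LMI2 by (simp add: M_def matrix_mul_assoc matrix_transpose_mul)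
  then obtain c where "c > 0" and c: "\<forall>i\<in>{1..N}. \<forall>y. C i *v y = 0 \<longrightarrow>
      (M i *v y) \<bullet> (P *v y) + y \<bullet> (P *v (M i *v y)) \<le> - c * (norm (M i *v y))\<^sup>2"
    using uniform_lyapunov_rate[OF finite_atLeastAtMost] by blast
  obtain B where "B > 0" and B: "\<forall>v. v \<bullet> (P *v v) \<le> B * (norm v)\<^sup>2"
    using quadratic_form_bounded by blast
  have coercive: "\<forall>i\<in>{1..N}. \<forall>v\<in>consistency_space (E i) (A i). l * (norm v)\<^sup>2 \<le> v \<bullet> (P *v v)"
    using l C_ker by blast
  have decay: "\<forall>i\<in>{1..N}. \<forall>y\<in>consistency_space (E i) (A i).
      (M i *v y) \<bullet> (P *v y) + y \<bullet> (P *v (M i *v y)) \<le> - (c / B) * ((M i *v y) \<bullet> (P *v (M i *v y)))"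
    using c C_ker lyapunov_rate_from_norm_rate[OF \<open>B > 0\<close> B \<open>c > 0\<close>] by blast
  show ?thesis
  proof (rule GUES_if_quadratic_decay[OF \<open>l > 0\<close> \<open>B > 0\<close>])
    fix \<sigma> x t0 t assume "(\<sigma>, x, t0) \<in> S" "t0 \<le> t"
    then show "l * (norm (x t))\<^sup>2 \<le> B * exp (- (c / B) * (t - t0)) * (norm (x t0))\<^sup>2"
      using switched_solution_exponential_bound[OF _ _ A_inv coercive B decay[unfolded M_def]]
        S_sol S_jump by blast
  qed (use \<open>c > 0\<close> \<open>B > 0\<close> in simp)
qed

end
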